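(* Let $k$ be a positive integer and let $\zeta$ be a primitive $2k$-th root of unity. Let $Q_k$ denote the set of quasipolarities of $\mathbb{Z}/2k\mathbb{Z}$. Then \[ \sum_{\pi\in Q_{k}}\prod_{j=0}^{2k-1}\frac{1+\zeta^{j-\pi(j)}}{1-\zeta^{j-\pi(j)}} = [2\mid k]\,(|Q_{2k}|-|Q_{k}|) = [2\mid k]\,(s_{1}^{*}(2k)-s_{1}^{*}(k)), \] where $[2\mid k]$ equals $1$ if $k$ is even and $0$ if $k$ is odd.
   Context: The affine general linear group $\overrightarrow{GL}(\mathbb{Z}/m\mathbb{Z})$ consists of the maps $e^{u}.v:\mathbb{Z}/m\mathbb{Z}\to\mathbb{Z}/m\mathbb{Z}$, $x\mapsto vx+u$, with $u\in\mathbb{Z}/m\mathbb{Z}$ and $v\in(\mathbb{Z}/m\mathbb{Z})^{\times}$. For a positive integer $k$, $Q_k$ is the set of quasipolarities of $\mathbb{Z}/2k\mathbb{Z}$, i.e. elements $\pi\in\overrightarrow{GL}(\mathbb{Z}/2k\mathbb{Z})$ that are involutions ($\pi\circ\pi=\mathrm{id}$) and derangements ($\pi(x)\neq x$ for all $x$); thus $Q_{2k}$ is the corresponding set for $\mathbb{Z}/4k\mathbb{Z}$. Elements $j\in\{0,\dots,2k-1\}$ are identified with residues mod $2k$; the exponent $j-\pi(j)$ is taken mod $2k$ (well defined since $\zeta^{2k}=1$), and denominators are nonzero because $\pi$ is a derangement. A divisor $d$ of $n$ is unitary if $\gcd(d,n/d)=1$, and $s_1^{*}(n)$ denotes the sum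 of the unitary divisors of $n$. *)

theory Defs
  imports Complex_Main "HOL-Computational_Algebra.Primes" "HOL-Library.FuncSet"
begin

text \<open>Elements of the affine general linear group of Z/mZ, as maps on the
  residues {0..<m} (restricted, so that distinct maps are distinct functions):
  x maps to v x + u with u a residue and v a unit mod m.\<close>
definition affine_maps :: "nat \<Rightarrow> (nat \<Rightarrow> nat) set" where
  "affine_maps m = {restrict (\<lambda>x. (v * x + u) mod m) {0..<m} | u v.
      u < m \<and> v < m \<and> coprime v m}"

definition quasipolarities :: "nat \<Rightarrow> (nat \<Rightarrow> nat) set" where
  "quasipolarities m = {\<pi> \<in> affine_maps m.
      (\<forall>x\<in>{0..<m}. \<pi> (\<pi> x) = x) \<and> (\<forall>x\<in>{0..<m}. \<pi> x \<noteq> x)}"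

definition Q :: "nat \<Rightarrow> (nat \<Rightarrow> nat) set" where
  "Q k = quasipolarities (2 * k)"

definition primitive_root_of_unity :: "nat \<Rightarrow> complex \<Rightarrow> bool" where
  "primitive_root_of_unity n z \<longleftrightarrow> z ^ n = 1 \<and> (\<forall>d. 0 < d \<and> d < n \<longrightarrow> z ^ d \<noteq> 1)"

definition unitary_divisor_sum :: "nat \<Rightarrow> nat" where
  "unitary_divisor_sum n = (\<Sum>d\<in>{d. d dvd n \<and> coprime d (n div d)}. d)"

end

(*
  A quasipolarity of Z/2kZ is x |-> v x + u with v = 2a + 1 odd, and it is a fixed-point-free
  involution exactly when gcd(a,k) gcd(a+1,k) = k and u = gcd(a,k) (2t + 1) with t < gcd(a+1,k).
  As a |-> gcd(a+1,k) maps these a bijectively onto the unitary divisors of k, |Q k| = s1*(k).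

  For such a quasipolarity the j-th factor is the Cayley transform (1 + w)/(1 - w) of
  w = zeta^(j - pi j) = zeta^(-(2aj + u)). If gcd(a+1,k) is odd, some w equals -1 and the product
  vanishes. Otherwise pairing j with pi j conjugates the factors, so the product is a nonnegative
  real, while shifting j by a c with 2ac = k (mod 2k) negates every w and thus inverts every
  factor; hence the product is 1. The sum is therefore the sum of the even unitary divisors of k,
  which is s1*(2k) - s1*(k) for even k and 0 for odd k.
*)

theory Submission
  imports Defs "HOL-Number_Theory.Cong"
begin

section \<open>Affine involutions modulo \<open>m\<close>\<close>

lemma ex_linear_cong_zero_iff:
  fixes w u m :: nat
  assumes "0 < m"
  shows "(\<exists>x<m. [w * x + u = 0] (mod m)) \<longleftrightarrow> gcd w m dvd u"
proof
  assume "\<exists>x<m. [w * x + u = 0] (mod m)"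
  then obtain x where "m dvd w * x + u"
    unfolding cong_0_iff by blast
  then have "gcd w m dvd w * x + u"
    using dvd_trans gcd_dvd2 by blast
  then show "gcd w m dvd u"
    by (simp add: dvd_add_right_iff)
next
  assume "gcd w m dvd u"
  \<comment> \<open>\<open>(m - 1) u\<close> plays the role of \<open>- u\<close> in \<open>nat\<close>\<close>
  then have "gcd w m dvd (m - 1) * u"
    by simp
  then obtain x where x: "[w * x = (m - 1) * u] (mod m)"
    using cong_solve_dvd_nat by blast
  have "[w * (x mod m) + u = (m - 1) * u + u] (mod m)"
    using x by (intro cong_add) (simp_all add: cong_def mod_mult_right_eq)
  also have "(m - 1) * u + u = m * u"
    using assms by (simp add: algebra_simps)
  finally show "\<exists>x<m. [w * x + u = 0] (mod m)"
    using assms by (intro exI[of _ "x mod m"]) (simp add: cong_def)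
qed

definition affine_map :: "nat \<Rightarrow> nat \<Rightarrow> nat \<Rightarrow> nat \<Rightarrow> nat" where
  "affine_map m u v x = (v * x + u) mod m"

lemma affine_map_less: "0 < m \<Longrightarrow> affine_map m u v x < m"
  by (simp add: affine_map_def)

lemma affine_map_affine_map:
  "affine_map m u v (affine_map m u v x) = (v * v * x + (v + 1) * u) mod m"
proof -
  have "affine_map m u v (affine_map m u v x) = (v * (v * x + u) + u) mod m"
    unfolding affine_map_def by (metis mod_add_left_eq mod_mult_right_eq)
  then show ?thesis
    by (simp add: algebra_simps)
qed

lemma affine_map_involutive_iff:
  assumes "0 < m"
  shows "(\<forall>x<m. affine_map m u v (affine_map m u v x) = x) \<longleftrightarrow>
           [v * v = 1] (mod m) \<and> [(v + 1) * u = 0] (mod m)"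
proof
  assume inv: "\<forall>x<m. affine_map m u v (affine_map m u v x) = x"
  show "[v * v = 1] (mod m) \<and> [(v + 1) * u = 0] (mod m)"
  proof (cases "m = 1")
    case False
    have u: "[(v + 1) * u = 0] (mod m)"
      using inv assms by (auto simp: affine_map_affine_map cong_def)
    have "1 < m"
      using assms False by simp
    then have "[v * v + (v + 1) * u = 1] (mod m)"
      using inv[rule_format, of 1] by (simp add: affine_map_affine_map cong_def)
    moreover have "[v * v + 0 = v * v + (v + 1) * u] (mod m)"
      using u by (intro cong_add) (auto simp: cong_sym_eq)
    ultimately have "[v * v = 1] (mod m)"
      using cong_trans by fastforce
    with u show ?thesis
      by blast
  qed (simp add: cong_def)
next
  assume "[v * v = 1] (mod m) \<and> [(v + 1) * u = 0] (mod m)"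
  then have "[v * v * x + (v + 1) * u = 1 * x + 0] (mod m)" for x
    by (intro cong_add cong_mult) auto
  then show "\<forall>x<m. affine_map m u v (affine_map m u v x) = x"
    by (simp add: affine_map_affine_map cong_def)
qed

lemma affine_map_has_fixed_point_iff:
  assumes "0 < m"
  shows "(\<exists>x<m. affine_map m u (Suc w) x = x) \<longleftrightarrow> gcd w m dvd u"
proof -
  have "affine_map m u (Suc w) x = x \<longleftrightarrow> [w * x + u = 0] (mod m)" if "x < m" for x
  proof -
    have "affine_map m u (Suc w) x = x \<longleftrightarrow> [x + (w * x + u) = x + 0] (mod m)"
      using that by (simp add: affine_map_def cong_def algebra_simps)
    then show ?thesis
      by (simp only: cong_add_lcancel_nat)
  qed
  then have "(\<exists>x<m. affine_map m u (Suc w) x = x) \<longleftrightarrow> (\<exists>x<m. [w * x + u = 0] (mod m))"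
    by blast
  then show ?thesis
    using ex_linear_cong_zero_iff[OF assms] by simp
qed

definition quasipolarity_coeffs :: "nat \<Rightarrow> (nat \<times> nat) set" where
  "quasipolarity_coeffs m = {(u, v). u < m \<and> v < m \<and> coprime v m \<and>
     (\<forall>x<m. affine_map m u v (affine_map m u v x) = x) \<and> (\<forall>x<m. affine_map m u v x \<noteq> x)}"

lemma bij_betw_quasipolarity_coeffs:
  assumes "1 < m"
  shows "bij_betw (\<lambda>(u, v). restrict (affine_map m u v) {0..<m})
           (quasipolarity_coeffs m) (quasipolarities m)"
proof (rule bij_betw_imageI)
  show "inj_on (\<lambda>(u, v). restrict (affine_map m u v) {0..<m}) (quasipolarity_coeffs m)"
  proof (rule inj_onI, clarify)
    fix u v u' v'
    assume uv: "(u, v) \<in> quasipolarity_coeffs m" and uv': "(u', v') \<in> quasipolarity_coeffs m"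
      and eq: "restrict (affine_map m u v) {0..<m} = restrict (affine_map m u' v') {0..<m}"
    have "affine_map m u v x = affine_map m u' v' x" if "x < m" for x
      using fun_cong[OF eq, of x] that by simp
    from this[of 0] this[of 1] assms
    have "[u = u'] (mod m)" "[v + u = v' + u'] (mod m)"
      by (simp_all add: affine_map_def cong_def)
    moreover have "u < m" "v < m" "u' < m" "v' < m"
      using uv uv' by (auto simp: quasipolarity_coeffs_def)
    ultimately show "u = u' \<and> v = v'"
      by (metis cong_add_rcancel_nat cong_less_modulus_unique_nat)
  qed
  show "(\<lambda>(u, v). restrict (affine_map m u v) {0..<m}) ` quasipolarity_coeffs m = quasipolarities m"
    using assms
    by (auto simp: quasipolarity_coeffs_def quasipolarities_def affine_maps_def affine_map_less
        image_iff affine_map_def[abs_def])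
qed

section \<open>Parametrising the quasipolarities of \<open>\<int>/2k\<int>\<close>\<close>

definition split_residues :: "nat \<Rightarrow> nat set" where
  "split_residues k = {a. a < k \<and> gcd a k * gcd (Suc a) k = k}"

definition quasipolarity_params :: "nat \<Rightarrow> (nat \<times> nat) set" where
  "quasipolarity_params k = (SIGMA a:split_residues k. {..<gcd (Suc a) k})"

definition coeffs_of_params :: "nat \<Rightarrow> nat \<times> nat \<Rightarrow> nat \<times> nat" where
  "coeffs_of_params k = (\<lambda>(a, t). (gcd a k * (2 * t + 1), 2 * a + 1))"

lemma double_dvd_mult_iff:
  fixes g w :: nat
  assumes "0 < g"
  shows "2 * g dvd g * w \<longleftrightarrow> even w"
  using assms by (metis dvd_times_left_cancel_iff mult.commute not_gr0)

lemma coprime_gcd_gcd_Suc: "coprime (gcd a k) (gcd (Suc a) k)"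
  by (meson coprime_Suc_right_nat coprime_divisors gcd_dvd1)

lemma odd_quasipolarity_coeffs_iff:
  assumes "0 < k"
  shows "(u, 2 * a + 1) \<in> quasipolarity_coeffs (2 * k) \<longleftrightarrow>
           u < 2 * k \<and> a < k \<and> k dvd 2 * a * Suc a \<and> k dvd Suc a * u \<and> \<not> 2 * gcd a k dvd u"
proof -
  have square: "[(2 * a + 1) * (2 * a + 1) = 1] (mod 2 * k) \<longleftrightarrow> k dvd 2 * a * Suc a"
  proof -
    have "(2 * a + 1) * (2 * a + 1) = 2 * (2 * a * Suc a) + 1"
      by (simp add: algebra_simps)
    then have "[(2 * a + 1) * (2 * a + 1) = 1] (mod 2 * k) \<longleftrightarrow>
        [2 * (2 * a * Suc a) + 1 = 0 + 1] (mod 2 * k)"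
      by (simp only: add_0)
    also have "\<dots> \<longleftrightarrow> 2 * k dvd 2 * (2 * a * Suc a)"
      by (simp only: cong_add_rcancel_nat cong_0_iff)
    also have "\<dots> \<longleftrightarrow> k dvd 2 * a * Suc a"
      by (rule nat_mult_dvd_cancel1) simp
    finally show ?thesis .
  qed
  have "(2 * a + 1 + 1) * u = 2 * (Suc a * u)"
    by (simp add: algebra_simps)
  then have linear: "[(2 * a + 1 + 1) * u = 0] (mod 2 * k) \<longleftrightarrow> k dvd Suc a * u"
    using nat_mult_dvd_cancel1[of 2 k "Suc a * u"] by (simp only: cong_0_iff)
  have "(\<exists>x<2 * k. affine_map (2 * k) u (Suc (2 * a)) x = x) \<longleftrightarrow> 2 * gcd a k dvd u"
    using affine_map_has_fixed_point_iff[of "2 * k" u "2 * a"] assms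
    by (simp add: gcd_mult_distrib_nat)
  then have fixed: "(\<exists>x<2 * k. affine_map (2 * k) u (2 * a + 1) x = x) \<longleftrightarrow> 2 * gcd a k dvd u"
    by simp
  have coprime: "coprime (2 * a + 1) (2 * k)" if "k dvd 2 * a * Suc a"
  proof -
    have "[(2 * a + 1) * (2 * a + 1) = Suc 0] (mod 2 * k)"
      using that square by simp
    then show ?thesis
      unfolding coprime_iff_invertible_nat by blast
  qed
  show ?thesis
    unfolding quasipolarity_coeffs_def
    using affine_map_involutive_iff[of "2 * k" u "2 * a + 1"] assms square linear fixed coprime
    by auto
qed

lemma quasipolarity_conditions_imp_split:
  fixes a k u :: nat
  assumes k: "0 < k" and square: "k dvd 2 * a * Suc a" and linear: "k dvd Suc a * u"
    and no_fixed_point: "\<not> 2 * gcd a k dvd u"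
  shows "gcd a k * gcd (Suc a) k = k" and "gcd a k dvd u"
proof -
  \<comment> \<open>\<open>h = k / gcd (a + 1) k\<close> divides \<open>u\<close> and \<open>2 a\<close>, hence \<open>2 gcd a k\<close>; since
    \<open>gcd a k\<close> divides \<open>h\<close> and \<open>2 gcd a k\<close> does not divide \<open>u\<close>, \<open>h = gcd a k\<close>.\<close>
  define g1 g2 where "g1 = gcd a k" and "g2 = gcd (Suc a) k"
  obtain a' h where ah: "Suc a = a' * g2" "k = h * g2" "coprime a' h"
    using gcd_coprime_exists[of "Suc a" k] k unfolding g2_def by auto
  have "0 < g1" "0 < g2"
    using k by (simp_all add: g1_def g2_def)
  have "h * g2 dvd a' * u * g2"
    using linear ah by (simp add: ac_simps)
  then have "h dvd a' * u"
    using \<open>0 < g2\<close> by simp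
  then have h_u: "h dvd u"
    using ah(3) by (metis coprime_commute coprime_dvd_mult_right_iff)
  have "h * g2 dvd 2 * a * a' * g2"
    using square ah by (simp add: ac_simps)
  then have "h dvd 2 * a * a'"
    using \<open>0 < g2\<close> by simp
  then have "h dvd 2 * a"
    using ah(3) by (metis coprime_commute coprime_dvd_mult_left_iff)
  moreover have "h dvd 2 * k"
    using ah by simp
  ultimately have "h dvd 2 * g1"
    unfolding g1_def by (metis gcd_greatest gcd_mult_distrib_nat)
  moreover have "g1 dvd h"
    using coprime_gcd_gcd_Suc[of a k] ah(2) unfolding g1_def g2_def
    by (metis coprime_dvd_mult_left_iff gcd_dvd2)
  then obtain c where c: "h = g1 * c"
    by blast
  ultimately have "c dvd 2"
    using \<open>0 < g1\<close> by (simp add: mult.commute)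
  moreover have "c \<noteq> 2"
    using h_u c no_fixed_point by (auto simp: g1_def mult.commute)
  moreover have "c \<noteq> 0"
    using c ah k by auto
  ultimately have "c = 1"
    using dvd_imp_le[of c 2] by linarith
  then have "g1 * g2 = k" and "g1 dvd u"
    using ah(2) c h_u by simp_all
  then show "gcd a k * gcd (Suc a) k = k" and "gcd a k dvd u"
    by (simp_all add: g1_def g2_def)
qed

lemma coeffs_of_params_in_quasipolarity_coeffs:
  assumes k: "0 < k" and params: "(a, t) \<in> quasipolarity_params k"
  shows "coeffs_of_params k (a, t) \<in> quasipolarity_coeffs (2 * k)"
proof -
  have a: "a < k" and split: "gcd a k * gcd (Suc a) k = k" and t: "t < gcd (Suc a) k"
    using params by (auto simp: quasipolarity_params_def split_residues_def)
  have "gcd a k * (2 * t + 1) < gcd a k * (2 * gcd (Suc a) k)"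
    using k t by (intro mult_strict_left_mono) auto
  then have u: "gcd a k * (2 * t + 1) < 2 * k"
    using split by (simp add: ac_simps)
  have "gcd a k * gcd (Suc a) k dvd a * Suc a"
    by (intro mult_dvd_mono) auto
  then have square: "k dvd 2 * a * Suc a"
    using split dvd_mult[of k "a * Suc a" 2] by (simp add: ac_simps)
  have "gcd (Suc a) k * gcd a k dvd Suc a * (gcd a k * (2 * t + 1))"
    by (intro mult_dvd_mono) auto
  then have linear: "k dvd Suc a * (gcd a k * (2 * t + 1))"
    using split by (simp add: ac_simps)
  have "\<not> 2 * gcd a k dvd gcd a k * (2 * t + 1)"
    using k double_dvd_mult_iff[of "gcd a k" "2 * t + 1"] by simp
  then show ?thesis
    using odd_quasipolarity_coeffs_iff[OF k] a u square linear
    by (simp add: coeffs_of_params_def)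
qed

lemma quasipolarity_coeffs_in_image_coeffs_of_params:
  assumes k: "0 < k" and uv: "(u, v) \<in> quasipolarity_coeffs (2 * k)"
  shows "(u, v) \<in> coeffs_of_params k ` quasipolarity_params k"
proof -
  have "odd v"
    using uv by (auto simp: quasipolarity_coeffs_def)
  then obtain a where v: "v = 2 * a + 1"
    using oddE by blast
  then have a: "a < k" and u: "u < 2 * k" and square: "k dvd 2 * a * Suc a"
    and linear: "k dvd Suc a * u" and no_fixed_point: "\<not> 2 * gcd a k dvd u"
    using odd_quasipolarity_coeffs_iff[OF k] uv by auto
  note split = quasipolarity_conditions_imp_split[OF k square linear no_fixed_point]
  obtain w where w: "u = gcd a k * w"
    using split(2) by blast
  have "odd w"
    using no_fixed_point w k double_dvd_mult_iff[of "gcd a k" w] by simp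
  then obtain t where t: "w = 2 * t + 1"
    using oddE by blast
  have double_k: "gcd a k * (2 * gcd (Suc a) k) = 2 * k"
    using split(1) by (metis mult.left_commute)
  from u have "gcd a k * w < gcd a k * (2 * gcd (Suc a) k)"
    unfolding w double_k .
  then have "w < 2 * gcd (Suc a) k"
    by (simp only: mult_less_cancel1)
  then have "t < gcd (Suc a) k"
    using t by linarith
  then have "(a, t) \<in> quasipolarity_params k"
    using a split(1) by (simp add: quasipolarity_params_def split_residues_def)
  moreover have "(u, v) = coeffs_of_params k (a, t)"
    using v w t by (simp add: coeffs_of_params_def)
  ultimately show ?thesis
    by blast
qed

lemma bij_betw_coeffs_of_params:
  assumes k: "0 < k"
  shows "bij_betw (coeffs_of_params k) (quasipolarity_params k) (quasipolarity_coeffs (2 * k))"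
proof (rule bij_betw_imageI)
  show "inj_on (coeffs_of_params k) (quasipolarity_params k)"
    using k by (auto intro!: inj_onI simp: coeffs_of_params_def)
  show "coeffs_of_params k ` quasipolarity_params k = quasipolarity_coeffs (2 * k)"
    using coeffs_of_params_in_quasipolarity_coeffs[OF k] quasipolarity_coeffs_in_image_coeffs_of_params[OF k]
    by auto
qed

definition quasipolarity_of_params :: "nat \<Rightarrow> nat \<times> nat \<Rightarrow> nat \<Rightarrow> nat" where
  "quasipolarity_of_params k =
     (\<lambda>(u, v). restrict (affine_map (2 * k) u v) {0..<2 * k}) \<circ> coeffs_of_params k"

lemma bij_betw_quasipolarity_of_params:
  assumes "0 < k"
  shows "bij_betw (quasipolarity_of_params k) (quasipolarity_params k) (Q k)"
  unfolding quasipolarity_of_params_def Q_def using assms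
  by (intro bij_betw_trans[OF bij_betw_coeffs_of_params bij_betw_quasipolarity_coeffs]) auto

lemma finite_quasipolarity_params: "finite (quasipolarity_params k)"
  by (simp add: quasipolarity_params_def split_residues_def)

section \<open>Unitary divisors\<close>

definition unitary_divisors :: "nat \<Rightarrow> nat set" where
  "unitary_divisors n = {d. d dvd n \<and> coprime d (n div d)}"

lemma unitary_divisor_sum_eq: "unitary_divisor_sum n = \<Sum>(unitary_divisors n)"
  by (simp add: unitary_divisor_sum_def unitary_divisors_def)

lemma finite_unitary_divisors: "0 < n \<Longrightarrow> finite (unitary_divisors n)"
  unfolding unitary_divisors_def by (rule finite_subset[of _ "{..n}"]) (auto intro: dvd_imp_le)

lemma gcd_eq_of_coprime_split:
  fixes a d e :: nat
  assumes "coprime e d" "e dvd a" "d dvd Suc a"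
  shows "gcd a (e * d) = e" and "gcd (Suc a) (e * d) = d"
proof -
  have "coprime (gcd a (e * d)) d"
    using assms(3) by (meson coprime_Suc_right_nat coprime_divisors gcd_dvd1)
  then have "gcd a (e * d) dvd e"
    by (metis coprime_dvd_mult_left_iff gcd_dvd2)
  then show "gcd a (e * d) = e"
    using assms(2) by (simp add: dvd_antisym)
  have "coprime (gcd (Suc a) (e * d)) e"
    using assms(2) by (meson coprime_Suc_left_nat coprime_divisors gcd_dvd1)
  then have "gcd (Suc a) (e * d) dvd d"
    by (metis coprime_dvd_mult_right_iff gcd_dvd2)
  then show "gcd (Suc a) (e * d) = d"
    using assms(3) by (simp add: dvd_antisym)
qed

lemma inj_on_gcd_Suc_split_residues: "inj_on (\<lambda>a. gcd (Suc a) k) (split_residues k)"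
proof (rule inj_onI)
  fix a b
  assume "a \<in> split_residues k" "b \<in> split_residues k" and d: "gcd (Suc a) k = gcd (Suc b) k"
  then have a: "a < k" "gcd a k * gcd (Suc a) k = k" and b: "b < k" "gcd b k * gcd (Suc a) k = k"
    by (simp_all add: split_residues_def)
  then have "gcd a k * gcd (Suc a) k = gcd b k * gcd (Suc a) k"
    by simp
  moreover have "0 < gcd (Suc a) k"
    using a(1) by simp
  ultimately have e: "gcd a k = gcd b k"
    by simp
  have "[a = b] (mod gcd a k)"
    using gcd_dvd1[of a k] gcd_dvd1[of b k] e by (simp add: cong_def dvd_imp_mod_0)
  moreover have "[1 + a = 1 + b] (mod gcd (Suc a) k)"
    using gcd_dvd1[of "Suc a" k] gcd_dvd1[of "Suc b" k] d by (simp add: cong_def dvd_imp_mod_0)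
  then have "[a = b] (mod gcd (Suc a) k)"
    by (simp only: cong_add_lcancel_nat)
  ultimately have "[a = b] (mod k)"
    using coprime_cong_mult_nat coprime_gcd_gcd_Suc a(2) by metis
  then show "a = b"
    using a(1) b(1) by (rule cong_less_modulus_unique_nat)
qed

lemma gcd_Suc_split_residue_in_unitary_divisors:
  assumes "0 < k" "a \<in> split_residues k"
  shows "gcd (Suc a) k \<in> unitary_divisors k"
proof -
  have split: "gcd a k * gcd (Suc a) k = k"
    using assms(2) by (simp add: split_residues_def)
  have "k div gcd (Suc a) k = gcd a k * gcd (Suc a) k div gcd (Suc a) k"
    by (simp only: split)
  also have "\<dots> = gcd a k"
    using assms(1) by simp
  finally show ?thesis
    using coprime_gcd_gcd_Suc[of a k] by (simp add: unitary_divisors_def coprime_commute)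
qed

lemma unitary_divisor_eq_gcd_Suc_split_residue:
  assumes k: "0 < k" and "d \<in> unitary_divisors k"
  obtains a where "a \<in> split_residues k" "d = gcd (Suc a) k"
proof -
  have "d dvd k" and coprime: "coprime (k div d) d"
    using assms(2) by (simp_all add: unitary_divisors_def coprime_commute)
  define e where "e = k div d"
  have "coprime e d"
    using coprime by (simp add: e_def)
  have k_eq: "k = e * d"
    using \<open>d dvd k\<close> by (simp add: e_def)
  then have "0 < d"
    using k by auto
  \<comment> \<open>\<open>a = 0 (mod k/d)\<close> and \<open>a = -1 (mod d)\<close>, by the Chinese remainder theorem\<close>
  obtain x where x: "[x = 0] (mod e)" "[x = d - 1] (mod d)"
    using binary_chinese_remainder_nat[OF \<open>coprime e d\<close>] by blast
  define a where "a = x mod k"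
  have "[a = x] (mod k)"
    by (simp add: a_def)
  then have ae: "[a = x] (mod e)" and ad: "[a = x] (mod d)"
    using k_eq by (auto intro: cong_dvd_modulus_nat)
  have "e dvd a"
    using cong_trans[OF ae x(1)] by (simp add: cong_0_iff)
  have "[1 + a = 1 + (d - 1)] (mod d)"
    using cong_trans[OF ad x(2)] by (simp only: cong_add_lcancel_nat)
  then have "d dvd Suc a"
    using \<open>0 < d\<close> by (simp add: cong_def dvd_eq_mod_eq_0)
  note gcds = gcd_eq_of_coprime_split[OF \<open>coprime e d\<close> \<open>e dvd a\<close> \<open>d dvd Suc a\<close>]
  have "a < k"
    using k by (simp add: a_def)
  then have "a \<in> split_residues k"
    using gcds k_eq by (simp add: split_residues_def)
  moreover have "d = gcd (Suc a) k"
    using gcds k_eq by simp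
  ultimately show ?thesis
    by (rule that)
qed

lemma bij_betw_split_residues_unitary_divisors:
  assumes "0 < k"
  shows "bij_betw (\<lambda>a. gcd (Suc a) k) (split_residues k) (unitary_divisors k)"
proof (rule bij_betw_imageI)
  show "inj_on (\<lambda>a. gcd (Suc a) k) (split_residues k)"
    by (rule inj_on_gcd_Suc_split_residues)
  show "(\<lambda>a. gcd (Suc a) k) ` split_residues k = unitary_divisors k"
    using gcd_Suc_split_residue_in_unitary_divisors[OF assms]
      unitary_divisor_eq_gcd_Suc_split_residue[OF assms] by blast
qed

lemma card_quasipolarity_params_filter:
  assumes k: "0 < k"
  shows "card {p \<in> quasipolarity_params k. P (gcd (Suc (fst p)) k)} = \<Sum>{d \<in> unitary_divisors k. P d}"
proof -
  let ?A = "{a \<in> split_residues k. P (gcd (Suc a) k)}"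
  have "{p \<in> quasipolarity_params k. P (gcd (Suc (fst p)) k)} = (SIGMA a:?A. {..<gcd (Suc a) k})"
    by (auto simp: quasipolarity_params_def)
  then have "card {p \<in> quasipolarity_params k. P (gcd (Suc (fst p)) k)} = (\<Sum>a\<in>?A. gcd (Suc a) k)"
    by (simp add: split_residues_def)
  also have "\<dots> = \<Sum>{d \<in> unitary_divisors k. P d}"
    by (rule sum.reindex_bij_betw[where g = id, simplified])
      (rule bij_betw_Collect[OF bij_betw_split_residues_unitary_divisors[OF k]], simp)
  finally show ?thesis .
qed

lemma unitary_divisors_double_odd:
  assumes "odd d"
  shows "d \<in> unitary_divisors (2 * k) \<longleftrightarrow> d \<in> unitary_divisors k"
proof -
  have "coprime d 2"
    using assms by (simp add: coprime_commute)
  moreover have "2 * k div d = 2 * (k div d)" if "d dvd k"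
    using that by (simp add: div_mult_swap)
  ultimately show ?thesis
    by (auto simp: unitary_divisors_def coprime_dvd_mult_right_iff)
qed

lemma unitary_divisors_double_even:
  assumes "even k"
  shows "{d \<in> unitary_divisors (2 * k). even d} = (\<lambda>d. 2 * d) ` {d \<in> unitary_divisors k. even d}"
proof safe
  fix d
  assume "d \<in> unitary_divisors (2 * k)" "even d"
  then obtain d' where d': "d = 2 * d'" "d' dvd k" "coprime (2 * d') (k div d')"
    by (auto simp: unitary_divisors_def elim!: evenE)
  have "even d'"
  proof (rule ccontr)
    assume "odd d'"
    with \<open>even k\<close> d'(2) have "even (k div d')"
      by (metis dvd_mult_div_cancel even_mult_iff)
    with d'(3) show False
      by simp
  qed
  with d' show "d \<in> (\<lambda>d. 2 * d) ` {d \<in> unitary_divisors k. even d}"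
    by (auto simp: unitary_divisors_def)
next
  fix d
  assume "d \<in> unitary_divisors k" "even d"
  then have "d dvd k" "coprime d (k div d)" "odd (k div d)"
    by (auto simp: unitary_divisors_def)
  then show "2 * d \<in> unitary_divisors (2 * k)"
    by (simp add: unitary_divisors_def)
qed simp

lemma unitary_divisor_sum_double:
  assumes "0 < k" "even k"
  shows "unitary_divisor_sum (2 * k) = unitary_divisor_sum k + \<Sum>{d \<in> unitary_divisors k. even d}"
proof -
  have split: "\<Sum>(unitary_divisors n) = \<Sum>{d \<in> unitary_divisors n. odd d} + \<Sum>{d \<in> unitary_divisors n. even d}"
    if "0 < n" for n
    using finite_unitary_divisors[OF that] by (subst sum.union_disjoint[symmetric]) (auto intro: sum.cong)
  have "\<Sum>{d \<in> unitary_divisors (2 * k). even d} = 2 * \<Sum>{d \<in> unitary_divisors k. even d}"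
    unfolding unitary_divisors_double_even[OF assms(2)]
    by (subst sum.reindex) (auto simp: inj_on_def sum_distrib_left)
  moreover have "{d \<in> unitary_divisors (2 * k). odd d} = {d \<in> unitary_divisors k. odd d}"
    using unitary_divisors_double_odd by blast
  ultimately show ?thesis
    using split[of k] split[of "2 * k"] assms(1) by (simp add: unitary_divisor_sum_eq)
qed

lemma unitary_divisor_sum_double_diff:
  assumes "0 < k"
  shows "(if even k then 1 else 0) * (int (unitary_divisor_sum (2 * k)) - int (unitary_divisor_sum k))
           = int (\<Sum>{d \<in> unitary_divisors k. even d})"
proof (cases "even k")
  case True
  then show ?thesis
    using unitary_divisor_sum_double[OF assms] by simp
next
  case False
  then have no_even: "{d \<in> unitary_divisors k. even d} = {}"
    by (auto simp: unitary_divisors_def dest: dvd_trans)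
  show ?thesis
    unfolding no_even using False by simp
qed

lemma card_Q:
  assumes "0 < k"
  shows "card (Q k) = unitary_divisor_sum k"
proof -
  have "card (Q k) = card (quasipolarity_params k)"
    using bij_betw_quasipolarity_of_params[OF assms] by (simp add: bij_betw_same_card)
  also have "\<dots> = unitary_divisor_sum k"
    using card_quasipolarity_params_filter[OF assms, of "\<lambda>_. True"] by (simp add: unitary_divisor_sum_eq)
  finally show ?thesis .
qed

section \<open>Roots of unity and the Cayley transform\<close>

lemma primitive_root_nonzero:
  assumes "primitive_root_of_unity n z" "0 < n"
  shows "z \<noteq> 0"
  using assms by (auto simp: primitive_root_of_unity_def power_0_left)

lemma primitive_root_powi_eq_1_iff:
  assumes z: "primitive_root_of_unity n z" and n: "0 < n"
  shows "z powi e = 1 \<longleftrightarrow> int n dvd e"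
proof -
  define r where "r = e mod int n"
  have r: "0 \<le> r" "r < int n"
    using n by (simp_all add: r_def)
  have "z powi e = z powi (int n * (e div int n) + r)"
    by (simp add: r_def)
  also have "\<dots> = (z powi int n) powi (e div int n) * z powi r"
    using primitive_root_nonzero[OF z n] by (simp add: power_int_add power_int_mult)
  also have "\<dots> = z ^ nat r"
    using z r(1) by (simp add: primitive_root_of_unity_def power_int_def)
  finally have "z powi e = 1 \<longleftrightarrow> z ^ nat r = 1"
    by simp
  also have "\<dots> \<longleftrightarrow> nat r = 0"
  proof
    assume "z ^ nat r = 1"
    show "nat r = 0"
    proof (rule ccontr)
      assume "nat r \<noteq> 0"
      moreover have "nat r < n"
        using r by linarith
      ultimately show False
        using z \<open>z ^ nat r = 1\<close> unfolding primitive_root_of_unity_def by simp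
    qed
  qed simp
  also have "\<dots> \<longleftrightarrow> int n dvd e"
    using r by (auto simp: r_def dvd_eq_mod_eq_0)
  finally show ?thesis .
qed

lemma primitive_root_powi_eq_iff:
  assumes z: "primitive_root_of_unity n z" and n: "0 < n"
  shows "z powi e = z powi e' \<longleftrightarrow> [e = e'] (mod int n)"
proof -
  have "z powi e = z powi e' \<longleftrightarrow> z powi (e - e') = 1"
    using primitive_root_nonzero[OF z n] by (simp add: power_int_diff)
  then show ?thesis
    using primitive_root_powi_eq_1_iff[OF z n] by (simp add: cong_iff_dvd_diff)
qed

lemma primitive_root_power_half:
  assumes z: "primitive_root_of_unity (2 * k) z" and k: "0 < k"
  shows "z ^ k = -1"
proof -
  have "(z ^ k)\<^sup>2 = 1"
    using z by (simp add: primitive_root_of_unity_def power_mult [symmetric] mult.commute)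
  moreover have "z ^ k \<noteq> 1"
    using z k by (simp add: primitive_root_of_unity_def)
  ultimately show ?thesis
    by (simp add: power2_eq_1_iff)
qed

lemma primitive_root_powi_eq_minus_one_iff:
  assumes z: "primitive_root_of_unity (2 * k) z" and k: "0 < k"
  shows "z powi e = -1 \<longleftrightarrow> [e = int k] (mod int (2 * k))"
proof -
  have minus_one: "-1 = z powi int k"
    using primitive_root_power_half[OF z k] by simp
  show ?thesis
    unfolding minus_one by (rule primitive_root_powi_eq_iff[OF z]) (use k in simp)
qed

lemma cnj_primitive_root_powi:
  assumes z: "primitive_root_of_unity n z" and n: "0 < n"
  shows "cnj (z powi e) = z powi (- e)"
proof -
  have "norm z = 1"
    using z n power_eq_1_iff[of z n] by (simp add: primitive_root_of_unity_def)
  then have "cnj z = inverse z"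
    using complex_norm_square[of z] by (simp add: inverse_unique)
  then show ?thesis
    by (simp add: power_int_minus power_int_inverse)
qed

definition cayley :: "complex \<Rightarrow> complex" where
  "cayley w = (1 + w) / (1 - w)"

(* This holds also at w = 1 and w = -1, where both sides are 0 because x / 0 = 0. *)
lemma cayley_uminus: "cayley (- w) = inverse (cayley w)"
  by (simp add: cayley_def)

lemma cnj_cayley: "cnj (cayley w) = cayley (cnj w)"
  by (simp add: cayley_def)

lemma cayley_eq_0_iff: "cayley w = 0 \<longleftrightarrow> w = 1 \<or> w = -1"
  by (auto simp: cayley_def add_eq_0_iff)

lemma prod_conj_involution_nonneg:
  fixes g :: "'a \<Rightarrow> complex"
  assumes "finite A"
    and "\<forall>x\<in>A. \<sigma> x \<in> A \<and> \<sigma> (\<sigma> x) = x \<and> \<sigma> x \<noteq> x"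
    and "\<forall>x\<in>A. g (\<sigma> x) = cnj (g x)"
  shows "\<exists>r\<ge>0. prod g A = of_real r"
  using assms
proof (induction A rule: finite_psubset_induct)
  case (psubset A)
  show ?case
  proof (cases "A = {}")
    case False
    then obtain x where x: "x \<in> A"
      by blast
    define B where "B = A - {x, \<sigma> x}"
    have "\<sigma> x \<in> A" "\<sigma> x \<noteq> x" "\<sigma> (\<sigma> x) = x"
      using psubset.prems(1) x by auto
    have "\<forall>y\<in>B. \<sigma> y \<in> B \<and> \<sigma> (\<sigma> y) = y \<and> \<sigma> y \<noteq> y"
    proof
      fix y
      assume "y \<in> B"
      then have "y \<in> A" "y \<noteq> x" "y \<noteq> \<sigma> x"
        by (auto simp: B_def)
      then have "\<sigma> y \<in> A" "\<sigma> (\<sigma> y) = y" "\<sigma> y \<noteq> y"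
        using psubset.prems(1) by auto
      moreover have "\<sigma> y \<noteq> x" "\<sigma> y \<noteq> \<sigma> x"
        using \<open>\<sigma> (\<sigma> y) = y\<close> \<open>\<sigma> (\<sigma> x) = x\<close> \<open>y \<noteq> x\<close> \<open>y \<noteq> \<sigma> x\<close> by auto
      ultimately show "\<sigma> y \<in> B \<and> \<sigma> (\<sigma> y) = y \<and> \<sigma> y \<noteq> y"
        by (simp add: B_def)
    qed
    moreover have "B \<subset> A"
      using x by (auto simp: B_def)
    ultimately obtain r where r: "0 \<le> r" "prod g B = of_real r"
      using psubset.IH psubset.prems(2) by (meson psubsetD)
    have "prod g A = g x * g (\<sigma> x) * prod g B"
      using psubset.hyps x \<open>\<sigma> x \<in> A\<close> \<open>\<sigma> x \<noteq> x\<close>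
      by (simp add: B_def prod.remove flip: Diff_insert2 mult.assoc)
    also have "g x * g (\<sigma> x) = of_real ((norm (g x))\<^sup>2)"
      using psubset.prems(2) x complex_norm_square[of "g x"] by simp
    finally have "prod g A = of_real ((norm (g x))\<^sup>2 * r)"
      using r by simp
    then show ?thesis
      using r by (intro exI[of _ "(norm (g x))\<^sup>2 * r"]) simp
  qed (intro exI[of _ 1], simp)
qed

lemma prod_cayley_eq_1:
  fixes W :: "'a \<Rightarrow> complex"
  assumes "finite A"
    and \<sigma>: "\<forall>x\<in>A. \<sigma> x \<in> A \<and> \<sigma> (\<sigma> x) = x \<and> \<sigma> x \<noteq> x" "\<forall>x\<in>A. W (\<sigma> x) = cnj (W x)"
    and \<tau>: "bij_betw \<tau> A A" "\<forall>x\<in>A. W (\<tau> x) = - W x"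
    and "\<forall>x\<in>A. W x \<noteq> 1 \<and> W x \<noteq> -1"
  shows "(\<Prod>x\<in>A. cayley (W x)) = 1"
proof -
  define P where "P = (\<Prod>x\<in>A. cayley (W x))"
  obtain r where r: "0 \<le> r" "P = of_real r"
    using prod_conj_involution_nonneg[of A \<sigma> "\<lambda>x. cayley (W x)"] assms(1) \<sigma>
    unfolding P_def by (auto simp: cnj_cayley)
  have "P \<noteq> 0"
    using assms by (simp add: P_def cayley_eq_0_iff)
  have "P = (\<Prod>x\<in>A. cayley (W (\<tau> x)))"
    unfolding P_def by (rule prod.reindex_bij_betw[OF \<tau>(1), symmetric])
  also have "\<dots> = inverse P"
    using \<tau>(2) prod_inversef[of "\<lambda>x. cayley (W x)" A]
    by (simp add: P_def cayley_uminus comp_def)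
  finally have "P * P = 1"
    using \<open>P \<noteq> 0\<close> by (metis right_inverse)
  then have "r * r = 1"
    using r(2) by (metis of_real_eq_1_iff of_real_mult)
  then have "r = 1"
    using r(1) power2_eq_1_iff[of r] by (simp add: power2_eq_square)
  then show ?thesis
    using r(2) by (simp add: P_def)
qed

section \<open>The product attached to a quasipolarity\<close>

lemma bij_betw_add_mod:
  fixes m c :: nat
  assumes "0 < m"
  shows "bij_betw (\<lambda>j. (j + c) mod m) {0..<m} {0..<m}"
proof -
  have "inj_on (\<lambda>j. (j + c) mod m) {0..<m}"
  proof (rule inj_onI)
    fix x y
    assume "x \<in> {0..<m}" "y \<in> {0..<m}" "(x + c) mod m = (y + c) mod m"
    then show "x = y"
      unfolding cong_def[symmetric] cong_add_rcancel_nat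
      by (auto intro: cong_less_modulus_unique_nat)
  qed
  moreover have "(\<lambda>j. (j + c) mod m) ` {0..<m} \<subseteq> {0..<m}"
    using assms by auto
  ultimately show ?thesis
    by (simp add: bij_betw_def endo_inj_surj)
qed

lemma prod_cayley_involution_eq_1:
  fixes z :: complex and \<pi> \<tau> :: "nat \<Rightarrow> nat"
  defines "W \<equiv> \<lambda>j. z powi (int j - int (\<pi> j))"
  assumes z: "primitive_root_of_unity n z" "0 < n"
    and \<pi>: "\<forall>x<n. \<pi> x < n \<and> \<pi> (\<pi> x) = x \<and> \<pi> x \<noteq> x"
    and \<tau>: "bij_betw \<tau> {0..<n} {0..<n}" "\<forall>j<n. W (\<tau> j) = - W j"
    and no_minus_one: "\<forall>j<n. W j \<noteq> -1"
  shows "(\<Prod>j\<in>{0..<n}. cayley (W j)) = 1"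
proof (rule prod_cayley_eq_1[where \<sigma> = \<pi> and \<tau> = \<tau>])
  show "\<forall>j\<in>{0..<n}. W (\<pi> j) = cnj (W j)"
  proof
    fix j
    assume "j \<in> {0..<n}"
    then have "int (\<pi> j) - int (\<pi> (\<pi> j)) = - (int j - int (\<pi> j))"
      using \<pi> by simp
    then show "W (\<pi> j) = cnj (W j)"
      by (simp only: W_def cnj_primitive_root_powi[OF z])
  qed
  have "W j \<noteq> 1" if "j < n" for j
  proof
    assume "W j = 1"
    then have "[int j = int (\<pi> j)] (mod int n)"
      by (simp add: W_def primitive_root_powi_eq_1_iff[OF z] cong_iff_dvd_diff)
    then have "j = \<pi> j"
      using \<pi> that by (auto simp: cong_int_iff intro: cong_less_modulus_unique_nat)
    with \<pi> that show False
      by auto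
  qed
  then show "\<forall>j\<in>{0..<n}. W j \<noteq> 1 \<and> W j \<noteq> -1"
    using no_minus_one by auto
qed (use \<pi> \<tau> in auto)

lemma affine_map_exponent_cong:
  "[int j - int (affine_map m u (2 * a + 1) j) = - int (2 * a * j + u)] (mod int m)"
proof -
  have "[int (affine_map m u (2 * a + 1) j) = int ((2 * a + 1) * j + u)] (mod int m)"
    by (simp add: affine_map_def of_nat_mod)
  then have "[int j - int (affine_map m u (2 * a + 1) j) = int j - int ((2 * a + 1) * j + u)] (mod int m)"
    by (intro cong_diff) auto
  then show ?thesis
    by (simp add: algebra_simps)
qed

lemma ex_half_period_exponent_iff:
  assumes k: "0 < k" and params: "(a, t) \<in> quasipolarity_params k"
  defines "u \<equiv> gcd a k * (2 * t + 1)"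
  shows "(\<exists>j<2 * k. [- int (2 * a * j + u) = int k] (mod int (2 * k))) \<longleftrightarrow> odd (gcd (Suc a) k)"
proof -
  have cong_iff: "[- int (2 * a * j + u) = int k] (mod int (2 * k)) \<longleftrightarrow>
      [2 * a * j + (u + k) = 0] (mod 2 * k)" for j
  proof -
    have diff: "- int (2 * a * j + u) - int k = - int (2 * a * j + (u + k))"
      by simp
    have "[- int (2 * a * j + u) = int k] (mod int (2 * k)) \<longleftrightarrow>
        int (2 * k) dvd - int (2 * a * j + (u + k))"
      by (simp only: cong_iff_dvd_diff diff)
    also have "\<dots> \<longleftrightarrow> [2 * a * j + (u + k) = 0] (mod 2 * k)"
      by (simp only: dvd_minus_iff int_dvd_int_iff cong_0_iff)
    finally show ?thesis .
  qed
  have split: "gcd a k * gcd (Suc a) k = k"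
    using params by (simp add: quasipolarity_params_def split_residues_def)
  then have u_k: "u + k = gcd a k * (2 * t + 1 + gcd (Suc a) k)"
    by (simp add: u_def algebra_simps)
  have "0 < gcd a k"
    using k by simp
  have "(\<exists>j<2 * k. [2 * a * j + (u + k) = 0] (mod 2 * k)) \<longleftrightarrow> gcd (2 * a) (2 * k) dvd u + k"
    using k by (intro ex_linear_cong_zero_iff) simp
  also have "\<dots> \<longleftrightarrow> odd (gcd (Suc a) k)"
    by (simp only: gcd_mult_distrib_nat[symmetric] u_k double_dvd_mult_iff[OF \<open>0 < gcd a k\<close>]) simp
  finally show ?thesis
    by (simp only: cong_iff)
qed

lemma ex_half_period_multiplier:
  assumes "(a, t) \<in> quasipolarity_params k" "even (gcd (Suc a) k)"
  shows "\<exists>c. [2 * a * c = k] (mod 2 * k)"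
proof -
  obtain e where e: "gcd (Suc a) k = 2 * e"
    using assms(2) by (rule evenE)
  have split: "gcd a k * gcd (Suc a) k = k"
    using assms(1) by (simp add: quasipolarity_params_def split_residues_def)
  have "2 * gcd a k dvd gcd a k * gcd (Suc a) k"
    unfolding e by (simp add: ac_simps)
  then have "gcd (2 * a) (2 * k) dvd k"
    unfolding split gcd_mult_distrib_nat[symmetric] .
  then show ?thesis
    by (rule cong_solve_dvd_nat)
qed

lemma half_period_shift_exponent_cong:
  fixes a c j k u :: nat
  assumes c: "[2 * a * c = k] (mod 2 * k)"
  shows "[- int (2 * a * ((j + c) mod (2 * k)) + u) = - int (2 * a * j + u) + int k] (mod int (2 * k))"
proof -
  have "[2 * a * ((j + c) mod (2 * k)) + u + k = 2 * a * (j + c) + u + k] (mod 2 * k)"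
    by (intro cong_add cong_mult) simp_all
  also have "2 * a * (j + c) + u + k = 2 * a * j + u + (2 * a * c + k)"
    by (simp add: algebra_simps)
  also have "[\<dots> = 2 * a * j + u + (k + k)] (mod 2 * k)"
    using c by (intro cong_add) auto
  also have "2 * a * j + u + (k + k) = 2 * a * j + u + 2 * k"
    by simp
  finally have "[int (2 * a * ((j + c) mod (2 * k)) + u) + int k = int (2 * a * j + u)] (mod int (2 * k))"
    by (simp add: cong_int_iff[symmetric] cong_def)
  then have "[- (int (2 * a * ((j + c) mod (2 * k)) + u) + int k) + int k = - int (2 * a * j + u) + int k]
      (mod int (2 * k))"
    by (rule cong_add[OF cong_uminus cong_refl])
  then show ?thesis
    by simp
qed

lemma prod_cayley_coeffs_of_params:
  assumes k: "0 < k" and z: "primitive_root_of_unity (2 * k) z"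
    and params: "(a, t) \<in> quasipolarity_params k"
  defines "u \<equiv> gcd a k * (2 * t + 1)"
  shows "(\<Prod>j\<in>{0..<2 * k}. cayley (z powi (int j - int (affine_map (2 * k) u (2 * a + 1) j))))
           = (if even (gcd (Suc a) k) then 1 else 0)"
proof -
  define \<pi> where "\<pi> = affine_map (2 * k) u (2 * a + 1)"
  define W where "W j = z powi (int j - int (\<pi> j))" for j
  have "0 < 2 * k"
    using k by simp
  have "(u, 2 * a + 1) \<in> quasipolarity_coeffs (2 * k)"
    using coeffs_of_params_in_quasipolarity_coeffs[OF k params] by (simp add: u_def coeffs_of_params_def)
  then have \<pi>: "\<forall>x<2 * k. \<pi> x < 2 * k \<and> \<pi> (\<pi> x) = x \<and> \<pi> x \<noteq> x"
    using k by (simp add: quasipolarity_coeffs_def \<pi>_def affine_map_less)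
  have W_eq: "W j = z powi (- int (2 * a * j + u))" for j
    unfolding W_def \<pi>_def primitive_root_powi_eq_iff[OF z \<open>0 < 2 * k\<close>]
    by (rule affine_map_exponent_cong)
  have W_eq_minus_one_iff: "W j = -1 \<longleftrightarrow> [- int (2 * a * j + u) = int k] (mod int (2 * k))" for j
    unfolding W_eq by (rule primitive_root_powi_eq_minus_one_iff[OF z k])
  note ex_minus_one_iff = ex_half_period_exponent_iff[OF k params, folded u_def, folded W_eq_minus_one_iff]
  show ?thesis
  proof (cases "even (gcd (Suc a) k)")
    case False
    then obtain j where "j < 2 * k" "W j = -1"
      using ex_minus_one_iff by blast
    then have "(\<Prod>j\<in>{0..<2 * k}. cayley (W j)) = 0"
      by (intro prod_zero) (auto simp: cayley_eq_0_iff)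
    then show ?thesis
      by (simp only: W_def \<pi>_def if_not_P[OF False])
  next
    case True
    then obtain c where c: "[2 * a * c = k] (mod 2 * k)"
      using ex_half_period_multiplier[OF params True] by blast
    have "W ((j + c) mod (2 * k)) = - W j" for j
    proof -
      have "W ((j + c) mod (2 * k)) = z powi (- int (2 * a * j + u) + int k)"
        unfolding W_eq primitive_root_powi_eq_iff[OF z \<open>0 < 2 * k\<close>]
        by (rule half_period_shift_exponent_cong[OF c])
      also have "\<dots> = - W j"
        using primitive_root_nonzero[OF z] primitive_root_power_half[OF z k] k
        by (simp add: W_eq power_int_add)
      finally show ?thesis .
    qed
    then have "\<forall>j<2 * k. W ((j + c) mod (2 * k)) = - W j"
      by blast
    moreover have "\<forall>j<2 * k. W j \<noteq> -1"
      using ex_minus_one_iff True by blast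
    ultimately have "(\<Prod>j\<in>{0..<2 * k}. cayley (W j)) = 1"
      unfolding W_def
      by (rule prod_cayley_involution_eq_1[OF z \<open>0 < 2 * k\<close> \<pi> bij_betw_add_mod[OF \<open>0 < 2 * k\<close>]])
    then show ?thesis
      by (simp only: W_def \<pi>_def if_P[OF True])
  qed
qed

lemma sum_prod_cayley_Q:
  assumes k: "0 < k" and z: "primitive_root_of_unity (2 * k) z"
  shows "(\<Sum>\<pi>\<in>Q k. \<Prod>j\<in>{0..<2 * k}. cayley (z powi (int j - int (\<pi> j))))
           = of_nat (\<Sum>{d \<in> unitary_divisors k. even d})"
proof -
  define F where "F \<pi> = (\<Prod>j\<in>{0..<2 * k}. cayley (z powi (int j - int (\<pi> j))))" for \<pi>
  have "(\<Sum>\<pi>\<in>Q k. F \<pi>) = (\<Sum>p\<in>quasipolarity_params k. F (quasipolarity_of_params k p))"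
    by (rule sum.reindex_bij_betw[OF bij_betw_quasipolarity_of_params[OF k], symmetric])
  also have "\<dots> = (\<Sum>p\<in>quasipolarity_params k. if even (gcd (Suc (fst p)) k) then 1 else 0)"
  proof (rule sum.cong[OF refl], clarify)
    fix a t
    assume "(a, t) \<in> quasipolarity_params k"
    then show "F (quasipolarity_of_params k (a, t)) = (if even (gcd (Suc (fst (a, t))) k) then 1 else 0)"
      using prod_cayley_coeffs_of_params[OF k z]
      by (simp add: F_def quasipolarity_of_params_def coeffs_of_params_def)
  qed
  also have "\<dots> = of_nat (card {p \<in> quasipolarity_params k. even (gcd (Suc (fst p)) k)})"
    using finite_quasipolarity_params by (simp add: sum.inter_filter[symmetric])
  also have "\<dots> = of_nat (\<Sum>{d \<in> unitary_divisors k. even d})"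
    by (simp only: card_quasipolarity_params_filter[OF k])
  finally show ?thesis
    by (simp add: F_def)
qed

theorem theorem2p2:
  fixes k :: nat and \<zeta> :: complex
  assumes "k > 0" and "primitive_root_of_unity (2 * k) \<zeta>"
  shows "(\<Sum>\<pi>\<in>Q k. \<Prod>j\<in>{0..<2*k}.
            (1 + \<zeta> powi (int j - int (\<pi> j))) / (1 - \<zeta> powi (int j - int (\<pi> j))))
         = of_int ((if even k then 1 else 0) * (int (card (Q (2 * k))) - int (card (Q k))))
   \<and> (if even k then 1 else 0) * (int (card (Q (2 * k))) - int (card (Q k)))
         = (if even k then 1 else 0) * (int (unitary_divisor_sum (2 * k)) - int (unitary_divisor_sum k))"
proof -
  have "card (Q k) = unitary_divisor_sum k" "card (Q (2 * k)) = unitary_divisor_sum (2 * k)"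
    using assms(1) by (simp_all add: card_Q)
  then show ?thesis
    using sum_prod_cayley_Q[OF assms] unitary_divisor_sum_double_diff[OF assms(1)]
    by (simp add: cayley_def)
qed

end
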